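(* Let $R$ be a Dedekind domain with $\operatorname{char}(R)\neq3$ and fraction field $K$, and $\mathfrak a$ a fractional ideal of $R$. Let $f\in V_{\mathfrak a}$ with $\operatorname{disc}(f)\ne0$, and let $(S,I,\delta,s)$ be an $\mathfrak a$-balanced quadruple whose image under $\Phi_{\mathfrak a}$ is the $\mathrm{SL}(R\oplus\mathfrak a)$-orbit of $f$. Then $f$ has a zero $(x_0,y_0)\in K^2\setminus\{(0,0)\}$ if and only if $\delta=\gamma^3$ for some $\gamma\in(S\otimes_RK)^\times$.
   Context: $V_{\mathfrak a}=\{ax^3+3bx^2y+3cxy^2+dy^3: a\in\mathfrak a,b\in R,c\in\mathfrak a^{-1},d\in\mathfrak a^{-2}\}$, $\operatorname{disc}(f)=-3b^2c^2+4ac^3+4b^3d+a^2d^2-6abcd$; $\mathrm{SL}(R\oplus\mathfrak a)$ is the group of determinant-one matrices $\begin{pmatrix} r&x\\ y&s\end{pmatrix}$ with $r,s\in R$, $x\in\mathfrak a$, $y\in\mathfrak a^{-1}$, acting by $(g\cdot f)(x,y)=\det(g)^{-1}f((x,y)g)$. A quadratic $R$-algebra is a commutative $R$-algebra that is a rank-2 finitely generated torsion-free $R$-module; $N=N_{S\otimes K/K}$. An $\mathfrak a$-orientation is an isomorphism $\pi:\bigwedge^2S\to\mathfrak a$, equivalently a $\xi$ with $S=R+\mathfrak a\xi$ and $\pi_K(1\wedge\xi)=1$. An $\mathfrak a$-balanced quadruple: $S$ a nondegenerate (nonzero discriminant) $\mathfrak a$-oriented quadratic $R$-algebra, $I$ a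 fractional ideal of $S$, $\delta\in(S\otimes K)^\times$, $s\in K^\times$, with $I^3\subset\delta S$, $[S:I]_R=sR$ (module index) and $s^3=N(\delta)$. $\Phi_{\mathfrak a}(S,I,\delta,s)$ is the orbit of $C(x,y)=\pi_K(1\wedge(\alpha x+\beta y)^3\delta^{-1})$ for any decomposition $I=R\alpha+\mathfrak a\beta$ with $\pi_K(\alpha\wedge\beta)=s$. *)

theory Defs
  imports Main
begin

text \<open>R is modelled as a subset of a field of type 'k which is its fraction field.\<close>

definition subring_of :: "'k::field set \<Rightarrow> bool" where
  "subring_of R \<longleftrightarrow> 0 \<in> R \<and> 1 \<in> R \<and>
     (\<forall>x\<in>R. \<forall>y\<in>R. x + y \<in> R \<and> x * y \<in> R \<and> - x \<in> R)"

definition is_fraction_field :: "'k::field set \<Rightarrow> bool" where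
  "is_fraction_field R \<longleftrightarrow> (\<forall>z. \<exists>x\<in>R. \<exists>y\<in>R. y \<noteq> 0 \<and> z = x / y)"

definition rspan :: "'k::field set \<Rightarrow> 'k set \<Rightarrow> 'k set" where
  "rspan R X = {z. \<exists>F c. finite F \<and> F \<subseteq> X \<and> (\<forall>x\<in>F. c x \<in> R) \<and> z = (\<Sum>x\<in>F. c x * x)}"

definition ideal_of :: "'k::field set \<Rightarrow> 'k set \<Rightarrow> bool" where
  "ideal_of R P \<longleftrightarrow> P \<subseteq> R \<and> 0 \<in> P \<and> (\<forall>x\<in>P. \<forall>y\<in>P. x + y \<in> P) \<and>
     (\<forall>r\<in>R. \<forall>x\<in>P. r * x \<in> P)"

definition prime_ideal_of :: "'k::field set \<Rightarrow> 'k set \<Rightarrow> bool" where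
  "prime_ideal_of R P \<longleftrightarrow> ideal_of R P \<and> P \<noteq> R \<and>
     (\<forall>x\<in>R. \<forall>y\<in>R. x * y \<in> P \<longrightarrow> x \<in> P \<or> y \<in> P)"

definition maximal_ideal_of :: "'k::field set \<Rightarrow> 'k set \<Rightarrow> bool" where
  "maximal_ideal_of R P \<longleftrightarrow> ideal_of R P \<and> P \<noteq> R \<and>
     (\<forall>Q. ideal_of R Q \<and> P \<subseteq> Q \<longrightarrow> Q = P \<or> Q = R)"

definition noetherian :: "'k::field set \<Rightarrow> bool" where
  "noetherian R \<longleftrightarrow> (\<forall>P. ideal_of R P \<longrightarrow> (\<exists>F. finite F \<and> F \<subseteq> P \<and> P = rspan R F))"

definition integrally_closed :: "'k::field set \<Rightarrow> bool" where
  "integrally_closed R \<longleftrightarrow>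
     (\<forall>z. (\<exists>m::nat. \<exists>c::nat \<Rightarrow> 'k. m > 0 \<and> (\<forall>i<m. c i \<in> R) \<and>
            z ^ m + (\<Sum>i<m. c i * z ^ i) = 0) \<longrightarrow> z \<in> R)"

text \<open>Dedekind domain: noetherian, integrally closed, nonzero primes maximal
  (fields are allowed), with K its fraction field.\<close>
definition dedekind_with_frac_field :: "'k::field set \<Rightarrow> bool" where
  "dedekind_with_frac_field R \<longleftrightarrow> subring_of R \<and> is_fraction_field R \<and> noetherian R \<and>
     integrally_closed R \<and>
     (\<forall>P. prime_ideal_of R P \<and> P \<noteq> {0} \<longrightarrow> maximal_ideal_of R P)"

definition frac_ideal :: "'k::field set \<Rightarrow> 'k set \<Rightarrow> bool" where
  "frac_ideal R A \<longleftrightarrow> A \<noteq> {0} \<and> (\<exists>F. finite F \<and> A = rspan R F)"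

definition frac_inv :: "'k::field set \<Rightarrow> 'k set \<Rightarrow> 'k set" where
  "frac_inv R A = {x. \<forall>a\<in>A. x * a \<in> R}"

definition frac_inv2 :: "'k::field set \<Rightarrow> 'k set \<Rightarrow> 'k set" where
  "frac_inv2 R A = {x. \<forall>a\<in>A. \<forall>b\<in>A. x * a * b \<in> R}"

text \<open>A binary cubic form (c0,c1,c2,c3) means c0 x^3 + c1 x^2 y + c2 x y^2 + c3 y^3.\<close>
type_synonym 'k bcf = "'k \<times> 'k \<times> 'k \<times> 'k"

fun bcf_eval :: "'k::comm_ring_1 bcf \<Rightarrow> 'k \<Rightarrow> 'k \<Rightarrow> 'k" where
  "bcf_eval (c0, c1, c2, c3) x y = c0 * x^3 + c1 * x^2 * y + c2 * x * y^2 + c3 * y^3"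

definition Vform :: "'k::comm_ring_1 \<Rightarrow> 'k \<Rightarrow> 'k \<Rightarrow> 'k \<Rightarrow> 'k bcf" where
  "Vform a b c d = (a, 3 * b, 3 * c, d)"

definition bcf_disc :: "'k::comm_ring_1 \<Rightarrow> 'k \<Rightarrow> 'k \<Rightarrow> 'k \<Rightarrow> 'k" where
  "bcf_disc a b c d = - 3 * b^2 * c^2 + 4 * a * c^3 + 4 * b^3 * d + a^2 * d^2 - 6 * a * b * c * d"

text \<open>Matrices g = [[r, u], [v, s]] are 4-tuples (r,u,v,s).
  \<open>SL(R \<oplus> \<aa>)\<close>: r,s in R, u in \<aa>, v in \<aa>^{-1}, det 1.\<close>
definition SL_Ra :: "'k::field set \<Rightarrow> 'k set \<Rightarrow> ('k \<times> 'k \<times> 'k \<times> 'k) set" where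
  "SL_Ra R A = {(r, u, v, s) | r u v s. r \<in> R \<and> s \<in> R \<and> u \<in> A \<and> v \<in> frac_inv R A \<and>
                                    r * s - u * v = 1}"

text \<open>(g.f)(x,y) = det(g)^{-1} f((x,y)g), with (x,y)g = (r x + v y, u x + s y);
  coefficients of the resulting form.\<close>
fun bcf_act :: "'k::field \<times> 'k \<times> 'k \<times> 'k \<Rightarrow> 'k bcf \<Rightarrow> 'k bcf" where
  "bcf_act (r, u, v, s) (c0, c1, c2, c3) =
    (let p = r; q = v; r' = u; s' = s; dt = inverse (r * s - u * v) in
     (dt * (c0 * p^3 + c1 * p^2 * r' + c2 * p * r'^2 + c3 * r'^3),
      dt * (3 * c0 * p^2 * q + c1 * (p^2 * s' + 2 * p * q * r') + c2 * (2 * p * r' * s' + q * r'^2)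
            + 3 * c3 * r'^2 * s'),
      dt * (3 * c0 * p * q^2 + c1 * (2 * p * q * s' + q^2 * r') + c2 * (p * s'^2 + 2 * q * r' * s')
            + 3 * c3 * r' * s'^2),
      dt * (c0 * q^3 + c1 * q^2 * s' + c2 * q * s'^2 + c3 * s'^3)))"

lemma bcf_act_eval:
  "bcf_eval (bcf_act (r, u, v, s) f) x y =
     inverse (r * s - u * v) * bcf_eval f (r * x + v * y) (u * x + s * y)"
  by (cases f) (simp add: Let_def power2_eq_square power3_eq_cube algebra_simps)

text \<open>An \<open>\<aa>\<close>-oriented quadratic R-algebra is S = R + \<open>\<aa>\<close>\<xi> with
  \<xi>^2 = t\<xi> - n, t in \<open>\<aa>\<^sup>-\<^sup>1\<close>, n in \<open>\<aa>\<^sup>-\<^sup>2\<close>.  Elements x + y\<xi> of S\<otimes>K are pairs (x,y).\<close>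

definition qmul :: "'k::field \<Rightarrow> 'k \<Rightarrow> 'k \<times> 'k \<Rightarrow> 'k \<times> 'k \<Rightarrow> 'k \<times> 'k" where
  "qmul t n z w = (fst z * fst w - n * snd z * snd w,
                   fst z * snd w + snd z * fst w + t * snd z * snd w)"

definition qnorm :: "'k::field \<Rightarrow> 'k \<Rightarrow> 'k \<times> 'k \<Rightarrow> 'k" where
  "qnorm t n z = fst z ^ 2 + t * fst z * snd z + n * snd z ^ 2"

definition qinv :: "'k::field \<Rightarrow> 'k \<Rightarrow> 'k \<times> 'k \<Rightarrow> 'k \<times> 'k" where
  "qinv t n z = ((fst z + t * snd z) / qnorm t n z, - snd z / qnorm t n z)"

definition qunit :: "'k::field \<Rightarrow> 'k \<Rightarrow> 'k \<times> 'k \<Rightarrow> bool" where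
  "qunit t n z \<longleftrightarrow> (\<exists>w. qmul t n z w = (1, 0))"

definition qscal :: "'k::field \<Rightarrow> 'k \<times> 'k \<Rightarrow> 'k \<times> 'k" where
  "qscal c z = (c * fst z, c * snd z)"

definition qadd :: "'k::field \<times> 'k \<Rightarrow> 'k \<times> 'k \<Rightarrow> 'k \<times> 'k" where
  "qadd z w = (fst z + fst w, snd z + snd w)"

text \<open>\<open>\<pi>\<^sub>K(z \<and> w)\<close> for the orientation \<open>\<pi>\<^sub>K(1 \<and> \<xi>) = 1\<close>.\<close>
definition qpi :: "'k::field \<times> 'k \<Rightarrow> 'k \<times> 'k \<Rightarrow> 'k" where
  "qpi z w = fst z * snd w - snd z * fst w"

definition quad_alg :: "'k::field set \<Rightarrow> 'k set \<Rightarrow> 'k \<Rightarrow> 'k \<Rightarrow> bool" where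
  "quad_alg R A t n \<longleftrightarrow> t \<in> frac_inv R A \<and> n \<in> frac_inv2 R A"

text \<open>discriminant of the basis 1, \<xi> (up to the ideal factor \<open>\<aa>\<^sup>2\<close>)\<close>
definition qdisc :: "'k::field \<Rightarrow> 'k \<Rightarrow> 'k" where
  "qdisc t n = t^2 - 4 * n"

definition Sset :: "'k::field set \<Rightarrow> 'k set \<Rightarrow> ('k \<times> 'k) set" where
  "Sset R A = {(r, a) | r a. r \<in> R \<and> a \<in> A}"

text \<open>Fractional ideal of S: S-submodule of S\<otimes>K which is a lattice (c I \<subseteq> S and c S \<subseteq> I
  for some nonzero c in R, i.e. finitely generated of full rank).\<close>
definition qfrac_ideal :: "'k::field set \<Rightarrow> 'k set \<Rightarrow> 'k \<Rightarrow> 'k \<Rightarrow> ('k \<times> 'k) set \<Rightarrow> bool" where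
  "qfrac_ideal R A t n I \<longleftrightarrow> (0, 0) \<in> I \<and> (\<forall>z\<in>I. \<forall>w\<in>I. qadd z w \<in> I) \<and>
     (\<forall>\<sigma>\<in>Sset R A. \<forall>z\<in>I. qmul t n \<sigma> z \<in> I) \<and>
     (\<exists>c\<in>R. c \<noteq> 0 \<and> (\<forall>z\<in>I. qscal c z \<in> Sset R A) \<and> (\<forall>\<sigma>\<in>Sset R A. qscal c \<sigma> \<in> I))"

text \<open>Module index [M:N]_R of lattices in K^2: the R-module generated by determinants of
  K-linear maps \<phi> with \<phi>(M) \<subseteq> N; \<phi> = (p,q,r,s) : (x,y) \<mapsto> (p x + q y, r x + s y).\<close>
definition module_index :: "'k::field set \<Rightarrow> ('k \<times> 'k) set \<Rightarrow> ('k \<times> 'k) set \<Rightarrow> 'k set" where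
  "module_index R M N = rspan R {p * s - q * r | p q r s.
      \<forall>z\<in>M. (p * fst z + q * snd z, r * fst z + s * snd z) \<in> N}"

definition balanced_quadruple ::
  "'k::field set \<Rightarrow> 'k set \<Rightarrow> 'k \<Rightarrow> 'k \<Rightarrow> ('k \<times> 'k) set \<Rightarrow> 'k \<times> 'k \<Rightarrow> 'k \<Rightarrow> bool" where
  "balanced_quadruple R A t n I \<delta> s \<longleftrightarrow>
     quad_alg R A t n \<and> qdisc t n \<noteq> 0 \<and> qfrac_ideal R A t n I \<and> qunit t n \<delta> \<and> s \<noteq> 0 \<and>
     (\<forall>z1\<in>I. \<forall>z2\<in>I. \<forall>z3\<in>I. \<exists>\<sigma>\<in>Sset R A. qmul t n z1 (qmul t n z2 z3) = qmul t n \<delta> \<sigma>) \<and>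
     module_index R (Sset R A) I = {s * r | r. r \<in> R} \<and>
     s ^ 3 = qnorm t n \<delta>"

text \<open>C(x,y) = \<open>\<pi>\<^sub>K(1 \<and> (\<alpha>x+\<beta>y)^3 \<delta>^{-1})\<close>, expanded into coefficients.\<close>
definition Phi_form :: "'k::field \<Rightarrow> 'k \<Rightarrow> 'k \<times> 'k \<Rightarrow> 'k \<times> 'k \<Rightarrow> 'k \<times> 'k \<Rightarrow> 'k bcf" where
  "Phi_form t n \<delta> \<alpha> \<beta> =
    (let m = qmul t n; di = qinv t n \<delta>; p = (\<lambda>z. qpi (1, 0) z) in
     (p (m (m \<alpha> (m \<alpha> \<alpha>)) di),
      3 * p (m (m \<alpha> (m \<alpha> \<beta>)) di),
      3 * p (m (m \<alpha> (m \<beta> \<beta>)) di),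
      p (m (m \<beta> (m \<beta> \<beta>)) di)))"

text \<open>\<open>\<Phi>\<^sub>\<aa>(S,I,\<delta>,s)\<close> is the orbit of f: for a decomposition I = R\<alpha> + \<aa>\<beta> with
  \<open>\<pi>\<^sub>K(\<alpha>\<and>\<beta>) = s\<close>, the form C lies in SL(R\<oplus>\<aa>)\<cdot>f.\<close>
definition Phi_is_orbit_of ::
  "'k::field set \<Rightarrow> 'k set \<Rightarrow> 'k \<Rightarrow> 'k \<Rightarrow> ('k \<times> 'k) set \<Rightarrow> 'k \<times> 'k \<Rightarrow> 'k \<Rightarrow> 'k bcf \<Rightarrow> bool" where
  "Phi_is_orbit_of R A t n I \<delta> s f \<longleftrightarrow>
     (\<exists>\<alpha> \<beta>. I = {qadd (qscal r \<alpha>) (qscal a \<beta>) | r a. r \<in> R \<and> a \<in> A} \<and> qpi \<alpha> \<beta> = s \<and>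
        (\<exists>g\<in>SL_Ra R A. Phi_form t n \<delta> \<alpha> \<beta> = bcf_act g f))"

end

theory Submission imports Defs begin

text \<open>Write \<open>\<xi>(x,y) = \<alpha> x + \<beta> y\<close>, so that \<open>C(x,y)\<close> is the \<open>\<xi>\<close>-coordinate of
  \<open>\<xi>(x,y)\<^sup>3 \<delta>\<^sup>-\<^sup>1\<close>.  Since \<open>f\<close> and \<open>C\<close> differ by an invertible change of variables,
  \<open>f\<close> has a nontrivial zero iff \<open>\<xi>\<^sup>3 = k \<delta>\<close> for some nonzero \<open>\<xi> \<in> S \<otimes> K\<close> and \<open>k \<in> K\<close>.
  Nondegeneracy of \<open>S\<close> rules out nonzero elements with vanishing cube, so \<open>k \<noteq> 0\<close>;
  taking norms gives \<open>N(\<xi>)\<^sup>3 = k\<^sup>2 s\<^sup>3\<close>, and then \<open>\<gamma> = N(\<xi>) \<xi> / (s k)\<close> satisfies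
  \<open>\<gamma>\<^sup>3 = \<delta>\<close>.  Conversely, if \<open>\<delta> = \<gamma>\<^sup>3\<close>, the coordinates of \<open>\<gamma>\<close> in the basis \<open>\<alpha>, \<beta>\<close>
  give a zero of \<open>C\<close>.\<close>

abbreviation qcube :: "'k::field \<Rightarrow> 'k \<Rightarrow> 'k \<times> 'k \<Rightarrow> 'k \<times> 'k" where
  "qcube t n z \<equiv> qmul t n z (qmul t n z z)"

definition bcf_has_nontrivial_zero :: "'k::comm_ring_1 bcf \<Rightarrow> bool" where
  "bcf_has_nontrivial_zero f \<longleftrightarrow> (\<exists>x y. (x, y) \<noteq> (0, 0) \<and> bcf_eval f x y = 0)"

lemma qmul_commute: "qmul t n z w = qmul t n w z"
  by (simp add: qmul_def algebra_simps)

lemma qmul_assoc: "qmul t n (qmul t n z w) u = qmul t n z (qmul t n w u)"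
  by (simp add: qmul_def prod_eq_iff algebra_simps)

lemma qmul_one_left [simp]: "qmul t n (1, 0) z = z"
  by (simp add: qmul_def)

lemma qmul_one_right [simp]: "qmul t n z (1, 0) = z"
  by (simp add: qmul_def)

lemma qmul_qscal_left: "qmul t n (qscal c z) w = qscal c (qmul t n z w)"
  by (simp add: qmul_def qscal_def algebra_simps)

lemma qcube_qscal: "qcube t n (qscal c z) = qscal (c ^ 3) (qcube t n z)"
  by (simp add: qmul_def qscal_def power3_eq_cube algebra_simps)

lemma qnorm_qmul: "qnorm t n (qmul t n z w) = qnorm t n z * qnorm t n w"
  by (simp add: qmul_def qnorm_def power2_eq_square algebra_simps)

lemma qnorm_qscal: "qnorm t n (qscal c z) = c ^ 2 * qnorm t n z"
  by (simp add: qscal_def qnorm_def power2_eq_square algebra_simps)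

lemma qmul_qinv:
  assumes "qnorm t n z \<noteq> 0"
  shows "qmul t n z (qinv t n z) = (1, 0)"
proof (cases z)
  case (Pair a b)
  have "qmul t n z (qinv t n z) =
      ((a * (a + t * b) + n * b * b) / qnorm t n z, (a * - b + b * (a + t * b) + t * b * - b) / qnorm t n z)"
    using assms by (simp add: Pair qmul_def qinv_def field_simps)
  also have "\<dots> = (1, 0)"
    using assms by (simp add: Pair qnorm_def power2_eq_square algebra_simps)
  finally show ?thesis .
qed

lemma qunit_iff_qnorm_nonzero: "qunit t n z \<longleftrightarrow> qnorm t n z \<noteq> 0"
proof
  assume "qunit t n z"
  then obtain w where "qmul t n z w = (1, 0)" by (auto simp: qunit_def)
  then have "qnorm t n z * qnorm t n w = qnorm t n (1, 0)"
    by (simp flip: qnorm_qmul)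
  then have "qnorm t n z * qnorm t n w = 1"
    by (simp add: qnorm_def)
  then show "qnorm t n z \<noteq> 0" by auto
next
  assume "qnorm t n z \<noteq> 0"
  then show "qunit t n z"
    unfolding qunit_def by (blast intro: qmul_qinv)
qed

text \<open>Since the algebra is nondegenerate, a nilpotent element vanishes: it has norm
  and trace \<open>0\<close>, and \<open>disc \<cdot> y\<^sup>2 = Tr\<^sup>2 - 4 N\<close> for \<open>z = x + y \<xi>\<close>.\<close>

lemma qcube_eq_0_iff:
  assumes "qdisc t n \<noteq> 0"
  shows "qcube t n z = (0, 0) \<longleftrightarrow> z = (0, 0)"
proof
  assume z3: "qcube t n z = (0, 0)"
  obtain x y where z: "z = (x, y)" by (cases z)
  define tr where "tr = 2 * x + t * y"
  have "qnorm t n z * (qnorm t n z * qnorm t n z) = qnorm t n (0, 0)"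
    using z3 by (simp flip: qnorm_qmul)
  then have norm0: "qnorm t n z = 0"
    by (simp add: qnorm_def)
  have sq: "qmul t n z z = qscal tr z"
  proof -
    have "n * (y * y) = - (x * x) - t * x * y"
      using norm0 unfolding z qnorm_def power2_eq_square by simp algebra
    then show ?thesis
      by (simp add: z tr_def qmul_def qscal_def algebra_simps)
  qed
  have "qcube t n z = qscal tr (qmul t n z z)"
    by (simp only: sq qmul_commute[of t n z "qscal tr z"] qmul_qscal_left)
  also have "\<dots> = qscal (tr ^ 2) z"
    by (simp add: sq qscal_def power2_eq_square)
  finally have "tr = 0 \<or> z = (0, 0)"
    using z3 by (auto simp: qscal_def z)
  moreover have "tr = 0 \<Longrightarrow> y = 0"
  proof -
    have "qdisc t n * y ^ 2 = tr ^ 2 - 4 * qnorm t n z"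
      by (simp add: tr_def qdisc_def qnorm_def z power2_eq_square algebra_simps)
    then show "tr = 0 \<Longrightarrow> y = 0"
      using assms norm0 by simp
  qed
  moreover have "y = 0 \<Longrightarrow> x = 0"
    using norm0 by (simp add: z qnorm_def)
  ultimately show "z = (0, 0)"
    using z by blast
qed (simp add: qmul_def)

lemma qadd_qscal_eq_0_iff:
  assumes "qpi \<alpha> \<beta> \<noteq> 0"
  shows "qadd (qscal x \<alpha>) (qscal y \<beta>) = (0, 0) \<longleftrightarrow> x = 0 \<and> y = 0"
proof
  assume comb0: "qadd (qscal x \<alpha>) (qscal y \<beta>) = (0, 0)"
  obtain a1 a2 b1 b2 where ab: "\<alpha> = (a1, a2)" "\<beta> = (b1, b2)" by (cases \<alpha>, cases \<beta>)
  have "x * a1 + y * b1 = 0" "x * a2 + y * b2 = 0"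
    using comb0 by (auto simp: ab qadd_def qscal_def)
  then have "x * qpi \<alpha> \<beta> = 0" "y * qpi \<alpha> \<beta> = 0"
    unfolding ab qpi_def prod.sel by algebra+
  then show "x = 0 \<and> y = 0"
    using assms by simp
qed (simp add: qadd_def qscal_def)

lemma cramer_qpi:
  assumes "qpi \<alpha> \<beta> \<noteq> 0"
  shows "qadd (qscal (qpi \<gamma> \<beta> / qpi \<alpha> \<beta>) \<alpha>) (qscal (qpi \<alpha> \<gamma> / qpi \<alpha> \<beta>) \<beta>) = \<gamma>"
proof -
  obtain a1 a2 b1 b2 c1 c2 where abc: "\<alpha> = (a1, a2)" "\<beta> = (b1, b2)" "\<gamma> = (c1, c2)"
    by (cases \<alpha>, cases \<beta>, cases \<gamma>)
  have "qpi \<gamma> \<beta> * a1 + qpi \<alpha> \<gamma> * b1 = c1 * qpi \<alpha> \<beta>"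
    "qpi \<gamma> \<beta> * a2 + qpi \<alpha> \<gamma> * b2 = c2 * qpi \<alpha> \<beta>"
    by (simp_all add: abc qpi_def algebra_simps)
  with assms show ?thesis
    by (simp add: abc qadd_def qscal_def field_simps)
qed

lemma snd_qmul_qinv_eq_0_iff:
  assumes "qunit t n \<delta>"
  shows "snd (qmul t n w (qinv t n \<delta>)) = 0 \<longleftrightarrow> (\<exists>k. w = qscal k \<delta>)"
proof -
  have inv: "qmul t n \<delta> (qinv t n \<delta>) = (1, 0)"
    using assms by (simp add: qunit_iff_qnorm_nonzero qmul_qinv)
  show ?thesis
  proof
    assume snd0: "snd (qmul t n w (qinv t n \<delta>)) = 0"
    define k where "k = fst (qmul t n w (qinv t n \<delta>))"
    have k: "qmul t n w (qinv t n \<delta>) = qscal k (1, 0)"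
      using snd0 by (simp add: k_def qscal_def prod_eq_iff)
    have "w = qmul t n w (qmul t n \<delta> (qinv t n \<delta>))"
      by (simp add: inv)
    also have "\<dots> = qmul t n (qmul t n w (qinv t n \<delta>)) \<delta>"
      by (simp only: qmul_assoc qmul_commute[of t n "qinv t n \<delta>" \<delta>])
    also have "\<dots> = qscal k \<delta>"
      by (simp add: k qmul_qscal_left)
    finally show "\<exists>k. w = qscal k \<delta>" ..
  next
    assume "\<exists>k. w = qscal k \<delta>"
    then obtain k where "w = qscal k \<delta>" ..
    then have "qmul t n w (qinv t n \<delta>) = qscal k (1, 0)"
      by (simp only: qmul_qscal_left inv)
    then show "snd (qmul t n w (qinv t n \<delta>)) = 0"
      by (simp add: qscal_def)
  qed
qed

lemma cube_root_from_scaled_cube: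
  assumes norm_\<delta>: "qnorm t n \<delta> = s ^ 3" and "s \<noteq> 0" "k \<noteq> 0"
    and cube: "qcube t n z = qscal k \<delta>"
  shows "\<delta> = qcube t n (qscal (qnorm t n z / (s * k)) z)"
proof -
  have "qnorm t n z ^ 3 = qnorm t n (qcube t n z)"
    by (simp add: qnorm_qmul power3_eq_cube)
  also have "\<dots> = k ^ 2 * s ^ 3"
    by (simp add: cube qnorm_qscal norm_\<delta>)
  finally have "(qnorm t n z / (s * k)) ^ 3 * k = k ^ 2 * s ^ 3 / (s * k) ^ 3 * k"
    by (simp add: power_divide)
  also have "\<dots> = 1"
    using assms(2,3) by (simp add: power_mult_distrib power2_eq_square power3_eq_cube)
  finally have "(qnorm t n z / (s * k)) ^ 3 * k = 1" .
  then show ?thesis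
    unfolding qcube_qscal cube by (simp add: qscal_def mult.assoc[symmetric])
qed

lemma bcf_eval_Phi_form:
  "bcf_eval (Phi_form t n \<delta> \<alpha> \<beta>) x y =
     snd (qmul t n (qcube t n (qadd (qscal x \<alpha>) (qscal y \<beta>))) (qinv t n \<delta>))"
proof -
  obtain a1 a2 b1 b2 e1 e2 where "\<alpha> = (a1, a2)" "\<beta> = (b1, b2)" "qinv t n \<delta> = (e1, e2)"
    by (metis prod.exhaust)
  then show ?thesis
    unfolding Phi_form_def Let_def
    by (simp add: qmul_def qpi_def qadd_def qscal_def power2_eq_square power3_eq_cube algebra_simps)
qed

lemma Phi_form_has_nontrivial_zero_iff:
  assumes nondeg: "qdisc t n \<noteq> 0" and unit_\<delta>: "qunit t n \<delta>"
    and norm_\<delta>: "qnorm t n \<delta> = s ^ 3" and "s \<noteq> 0" and basis: "qpi \<alpha> \<beta> \<noteq> 0"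
  shows "bcf_has_nontrivial_zero (Phi_form t n \<delta> \<alpha> \<beta>) \<longleftrightarrow>
    (\<exists>\<gamma>. qunit t n \<gamma> \<and> \<delta> = qcube t n \<gamma>)"
proof
  assume "bcf_has_nontrivial_zero (Phi_form t n \<delta> \<alpha> \<beta>)"
  then obtain x y where "(x, y) \<noteq> (0, 0)" and zero: "bcf_eval (Phi_form t n \<delta> \<alpha> \<beta>) x y = 0"
    by (auto simp: bcf_has_nontrivial_zero_def)
  define z where "z = qadd (qscal x \<alpha>) (qscal y \<beta>)"
  have "z \<noteq> (0, 0)"
    using \<open>(x, y) \<noteq> (0, 0)\<close> qadd_qscal_eq_0_iff[OF basis] by (simp add: z_def)
  obtain k where cube: "qcube t n z = qscal k \<delta>"
    using zero unit_\<delta> by (auto simp: bcf_eval_Phi_form snd_qmul_qinv_eq_0_iff z_def)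
  have "k \<noteq> 0"
    using cube \<open>z \<noteq> (0, 0)\<close> qcube_eq_0_iff[OF nondeg, of z] by (auto simp: qscal_def)
  define \<gamma> where "\<gamma> = qscal (qnorm t n z / (s * k)) z"
  have "\<delta> = qcube t n \<gamma>"
    unfolding \<gamma>_def using cube_root_from_scaled_cube[OF norm_\<delta> \<open>s \<noteq> 0\<close> \<open>k \<noteq> 0\<close> cube] .
  moreover have "qunit t n \<gamma>"
    using unit_\<delta> \<open>\<delta> = qcube t n \<gamma>\<close> by (simp add: qunit_iff_qnorm_nonzero qnorm_qmul)
  ultimately show "\<exists>\<gamma>. qunit t n \<gamma> \<and> \<delta> = qcube t n \<gamma>"
    by blast
next
  assume "\<exists>\<gamma>. qunit t n \<gamma> \<and> \<delta> = qcube t n \<gamma>"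
  then obtain \<gamma> where "qunit t n \<gamma>" and \<delta>: "\<delta> = qcube t n \<gamma>"
    by blast
  define x where "x = qpi \<gamma> \<beta> / qpi \<alpha> \<beta>"
  define y where "y = qpi \<alpha> \<gamma> / qpi \<alpha> \<beta>"
  have coords: "qadd (qscal x \<alpha>) (qscal y \<beta>) = \<gamma>"
    unfolding x_def y_def by (rule cramer_qpi[OF basis])
  have "\<gamma> \<noteq> (0, 0)"
    using \<open>qunit t n \<gamma>\<close> by (auto simp: qunit_iff_qnorm_nonzero qnorm_def)
  then have "(x, y) \<noteq> (0, 0)"
    using coords by (auto simp: qadd_def qscal_def)
  moreover have "bcf_eval (Phi_form t n \<delta> \<alpha> \<beta>) x y = 0"
    using unit_\<delta> by (auto simp: bcf_eval_Phi_form coords \<delta> qunit_iff_qnorm_nonzero qmul_qinv)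
  ultimately show "bcf_has_nontrivial_zero (Phi_form t n \<delta> \<alpha> \<beta>)"
    by (auto simp: bcf_has_nontrivial_zero_def)
qed

lemma bcf_act_has_nontrivial_zero_iff:
  assumes det: "r * s - u * v \<noteq> 0"
  shows "bcf_has_nontrivial_zero (bcf_act (r, u, v, s) f) \<longleftrightarrow> bcf_has_nontrivial_zero f"
proof
  assume "bcf_has_nontrivial_zero (bcf_act (r, u, v, s) f)"
  then obtain x y where "(x, y) \<noteq> (0, 0)" and "bcf_eval (bcf_act (r, u, v, s) f) x y = 0"
    by (auto simp: bcf_has_nontrivial_zero_def)
  then have "bcf_eval f (r * x + v * y) (u * x + s * y) = 0"
    using det by (simp add: bcf_act_eval)
  moreover have "(r * x + v * y, u * x + s * y) \<noteq> (0, 0)"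
  proof
    assume "(r * x + v * y, u * x + s * y) = (0, 0)"
    then have "r * x + v * y = 0" "u * x + s * y = 0"
      by simp_all
    then have "(r * s - u * v) * x = 0" "(r * s - u * v) * y = 0"
      by algebra+
    then show False
      using det \<open>(x, y) \<noteq> (0, 0)\<close> by simp
  qed
  ultimately show "bcf_has_nontrivial_zero f"
    unfolding bcf_has_nontrivial_zero_def by blast
next
  assume "bcf_has_nontrivial_zero f"
  then obtain x0 y0 where "(x0, y0) \<noteq> (0, 0)" and zero: "bcf_eval f x0 y0 = 0"
    by (auto simp: bcf_has_nontrivial_zero_def)
  define D where "D = r * s - u * v"
  define x where "x = (s * x0 - v * y0) / D"
  define y where "y = (r * y0 - u * x0) / D"
  have "r * (s * x0 - v * y0) + v * (r * y0 - u * x0) = D * x0"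
    "u * (s * x0 - v * y0) + s * (r * y0 - u * x0) = D * y0"
    by (simp_all add: D_def algebra_simps)
  then have "r * x + v * y = x0" "u * x + s * y = y0"
    using det by (simp_all add: x_def y_def D_def[symmetric] field_simps)
  then have "(x, y) \<noteq> (0, 0)" and "bcf_eval (bcf_act (r, u, v, s) f) x y = 0"
    using \<open>(x0, y0) \<noteq> (0, 0)\<close> zero by (auto simp: bcf_act_eval)
  then show "bcf_has_nontrivial_zero (bcf_act (r, u, v, s) f)"
    unfolding bcf_has_nontrivial_zero_def by blast
qed

theorem mainTheorem7:
  fixes R A :: "'k::field set" and a b c d t n s :: 'k
    and I :: "('k \<times> 'k) set" and \<delta> :: "'k \<times> 'k"
  assumes "dedekind_with_frac_field R"
    and "(3::'k) \<noteq> 0"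
    and "frac_ideal R A"
    and "a \<in> A" and "b \<in> R" and "c \<in> frac_inv R A" and "d \<in> frac_inv2 R A"
    and "bcf_disc a b c d \<noteq> 0"
    and "balanced_quadruple R A t n I \<delta> s"
    and "Phi_is_orbit_of R A t n I \<delta> s (Vform a b c d)"
  shows "(\<exists>x0 y0. (x0, y0) \<noteq> (0, 0) \<and> bcf_eval (Vform a b c d) x0 y0 = 0) \<longleftrightarrow>
         (\<exists>\<gamma>. qunit t n \<gamma> \<and> \<delta> = qmul t n \<gamma> (qmul t n \<gamma> \<gamma>))"
proof -
  have nondeg: "qdisc t n \<noteq> 0" and unit_\<delta>: "qunit t n \<delta>"
    and "s \<noteq> 0" and norm_\<delta>: "qnorm t n \<delta> = s ^ 3"
    using assms(9) by (auto simp: balanced_quadruple_def)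
  obtain \<alpha> \<beta> g where "qpi \<alpha> \<beta> = s" and "g \<in> SL_Ra R A"
    and Phi: "Phi_form t n \<delta> \<alpha> \<beta> = bcf_act g (Vform a b c d)"
    using assms(10) unfolding Phi_is_orbit_of_def by blast
  then obtain r u v s' where g: "g = (r, u, v, s')" and "r * s' - u * v = 1"
    unfolding SL_Ra_def by blast
  have "bcf_has_nontrivial_zero (Vform a b c d) \<longleftrightarrow>
      bcf_has_nontrivial_zero (Phi_form t n \<delta> \<alpha> \<beta>)"
    unfolding Phi g using bcf_act_has_nontrivial_zero_iff[of r s' u v] \<open>r * s' - u * v = 1\<close> by simp
  also have "\<dots> \<longleftrightarrow> (\<exists>\<gamma>. qunit t n \<gamma> \<and> \<delta> = qcube t n \<gamma>)"
    using \<open>qpi \<alpha> \<beta> = s\<close> \<open>s \<noteq> 0\<close>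
    by (intro Phi_form_has_nontrivial_zero_iff[OF nondeg unit_\<delta> norm_\<delta> \<open>s \<noteq> 0\<close>]) simp
  finally show ?thesis
    unfolding bcf_has_nontrivial_zero_def .
qed

end
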